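(* Let $X=(X_1,\dots,X_p)^\top$ be a strictly positive random vector following a recursive max-linear structural equation model on a DAG $\mathcal G^*=(V,E^* )$, $V=\{1,\dots,p\}$: $X_j=\max\big(\max_{m\in\mathrm{pa}^*(j)}a_{mj}X_m,\ \epsilon_j\big)$ with $a_{mj}>0$ and mutually independent unit Fréchet innovations $\epsilon_1,\dots,\epsilon_p$. Fix a node $j$ with $\mathrm{pa}^*(j)\neq\emptyset$, and let $\mathrm{nb}^*(j)=\{i:(i,j)\in E^*\text{ or }(j,i)\in E^*\}$. Assume: (A) (non-vanishing error for omitted parents) for every nonempty $A\subseteq\mathrm{nb}^*(j)$ with $A\not\supseteq\mathrm{pa}^*(j)$, $\liminf_{u\to\infty}\big[R^\star_{j\mid A}(u)-R^\star_{j\mid\mathrm{pa}^*(j)}(u)\big]>0$; (B) (no gain from spurious supersets) for every $A\subseteq \mathrm{nb}^*(j)$ with $A\supsetneq\mathrm{pa}^*(j)$, $R^\star_{j\mid A}(u)\ge R^\star_{j\mid\mathrm{pa}^*(j)}(u)$ for all sufficiently large $u$. Then for every sufficiently large fixed threshold $u$, $\mathrm{pa}^*(j)$ is the unique inclusion-minimal minimizer of $A\mapsto R^\star_{j\mid A}(u)$ over nonempty $A\subseteq\mathrm{nb}^*(j)$; that is, it is a minimizer and every minimizer contains $\mathrm{pa}^*(j)$.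
   Context: For each $j$, $F_j$ is the distribution function of $X_j$, $Y_j=1/(1-F_j(X_j))$ and, for a threshold $u>1$, $Z_j=\log Y_j-\log u$. For a nonempty $A\subseteq V\setminus\{j\}$, the multivariate max-linear envelope class is $\mathcal H_A=\{h_A(z_A)=\max(c_0,\max_{m\in A}(z_m+c_{m\to j})): c_0, c_{m\to j}\in\mathbb R\}$, and the population tail prediction risk is $R^\star_{j\mid A}(u)=\inf_{h_A\in\mathcal H_A}\mathbb E\big[|Z_j-h_A(Z_A)|\ \big|\ \max_{m\in A}Z_m>0\big]$. *)

theory Defs
  imports "HOL-Probability.Probability"
begin

definition parents :: "(nat \<times> nat) set \<Rightarrow> nat \<Rightarrow> nat set" where
  "parents E j = {m. (m, j) \<in> E}"

definition neighbours :: "(nat \<times> nat) set \<Rightarrow> nat \<Rightarrow> nat set" where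
  "neighbours E j = {i. (i, j) \<in> E \<or> (j, i) \<in> E}"

definition unit_frechet :: "'a measure \<Rightarrow> ('a \<Rightarrow> real) \<Rightarrow> bool" where
  "unit_frechet M e \<longleftrightarrow> e \<in> borel_measurable M \<and>
     (\<forall>x. measure M {\<omega> \<in> space M. e \<omega> \<le> x} = (if x > 0 then exp (- 1 / x) else 0))"

definition max_linear_sem ::
  "'a measure \<Rightarrow> nat \<Rightarrow> (nat \<times> nat) set \<Rightarrow> (nat \<Rightarrow> nat \<Rightarrow> real) \<Rightarrow>
   (nat \<Rightarrow> 'a \<Rightarrow> real) \<Rightarrow> (nat \<Rightarrow> 'a \<Rightarrow> real) \<Rightarrow> bool" where
  "max_linear_sem M p E a eps X \<longleftrightarrow>
     prob_space M \<and>
     E \<subseteq> {1..p} \<times> {1..p} \<and> acyclic E \<and>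
     (\<forall>(m, j) \<in> E. a m j > 0) \<and>
     prob_space.indep_vars M (\<lambda>_. borel) eps {1..p} \<and>
     (\<forall>i \<in> {1..p}. unit_frechet M (eps i)) \<and>
     (\<forall>i \<in> {1..p}. \<forall>\<omega> \<in> space M. X i \<omega> > 0) \<and>
     (\<forall>j \<in> {1..p}. \<forall>\<omega> \<in> space M.
        X j \<omega> = Max (insert (eps j \<omega>) ((\<lambda>m. a m j * X m \<omega>) ` parents E j)))"

definition dist_fun :: "'a measure \<Rightarrow> (nat \<Rightarrow> 'a \<Rightarrow> real) \<Rightarrow> nat \<Rightarrow> real \<Rightarrow> real" where
  "dist_fun M X j x = measure M {\<omega> \<in> space M. X j \<omega> \<le> x}"

definition Zvar :: "'a measure \<Rightarrow> (nat \<Rightarrow> 'a \<Rightarrow> real) \<Rightarrow> real \<Rightarrow> nat \<Rightarrow> 'a \<Rightarrow> real" where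
  "Zvar M X u j \<omega> = ln (1 / (1 - dist_fun M X j (X j \<omega>))) - ln u"

definition envelope :: "real \<Rightarrow> (nat \<Rightarrow> real) \<Rightarrow> nat set \<Rightarrow> (nat \<Rightarrow> real) \<Rightarrow> real" where
  "envelope c0 c A z = max c0 (Max ((\<lambda>m. z m + c m) ` A))"

definition tail_event :: "'a measure \<Rightarrow> (nat \<Rightarrow> 'a \<Rightarrow> real) \<Rightarrow> real \<Rightarrow> nat set \<Rightarrow> 'a set" where
  "tail_event M X u A = {\<omega> \<in> space M. Max ((\<lambda>m. Zvar M X u m \<omega>) ` A) > 0}"

definition tail_loss ::
  "'a measure \<Rightarrow> (nat \<Rightarrow> 'a \<Rightarrow> real) \<Rightarrow> nat \<Rightarrow> nat set \<Rightarrow> real \<Rightarrow> real \<Rightarrow> (nat \<Rightarrow> real) \<Rightarrow> real" where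
  "tail_loss M X j A u c0 c =
     (\<integral>\<omega>. \<bar>Zvar M X u j \<omega> - envelope c0 c A (\<lambda>m. Zvar M X u m \<omega>)\<bar>
            * indicator (tail_event M X u A) \<omega> \<partial>M)
     / measure M (tail_event M X u A)"

definition tail_risk ::
  "'a measure \<Rightarrow> (nat \<Rightarrow> 'a \<Rightarrow> real) \<Rightarrow> nat \<Rightarrow> nat set \<Rightarrow> real \<Rightarrow> real" where
  "tail_risk M X j A u = (INF cc \<in> (UNIV :: (real \<times> (nat \<Rightarrow> real)) set).
                             tail_loss M X j A u (fst cc) (snd cc))"

end

theory Submission
  imports Defs
begin

text \<open>The theorem is a consequence of assumptions (A) and (B) alone; the max-linear model only
  guarantees that the neighbourhood of \<open>j\<close> is finite. For each candidate set \<open>A\<close>,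
  (A) or (B) says that \<open>pa(j)\<close> eventually does at least as well as \<open>A\<close>, and strictly better
  when \<open>A\<close> misses a parent. Finitely many candidates give a common threshold, beyond which
  \<open>pa(j)\<close> is a minimizer, and any set missing a parent is strictly beaten by it.\<close>

lemma eventually_less_if_Liminf_diff_pos:
  assumes "Liminf F (\<lambda>x. ereal (f x - g x)) > 0"
  shows "eventually (\<lambda>x. g x < f x) F"
proof -
  have "eventually (\<lambda>x. 0 < ereal (f x - g x)) F"
    using assms by (rule less_LiminfD)
  then show ?thesis by eventually_elim simp
qed

lemma eventually_risk_separation:
  fixes R :: "'b set \<Rightarrow> 'c \<Rightarrow> real"
  assumes "finite \<S>"
    and omitted: "\<And>S. S \<in> \<S> \<Longrightarrow> \<not> P \<subseteq> S \<Longrightarrow> Liminf F (\<lambda>x. ereal (R S x - R P x)) > 0"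
    and superset: "\<And>S. S \<in> \<S> \<Longrightarrow> P \<subset> S \<Longrightarrow> eventually (\<lambda>x. R P x \<le> R S x) F"
  shows "eventually (\<lambda>x. \<forall>S\<in>\<S>. R P x \<le> R S x \<and> (\<not> P \<subseteq> S \<longrightarrow> R P x < R S x)) F"
  using \<open>finite \<S>\<close>
proof (rule eventually_ball_finite, intro ballI)
  fix S assume S: "S \<in> \<S>"
  consider "\<not> P \<subseteq> S" | "P = S" | "P \<subset> S" by blast
  then show "eventually (\<lambda>x. R P x \<le> R S x \<and> (\<not> P \<subseteq> S \<longrightarrow> R P x < R S x)) F"
  proof cases
    case 1
    then have "eventually (\<lambda>x. R P x < R S x) F"
      using S omitted eventually_less_if_Liminf_diff_pos by blast
    then show ?thesis by eventually_elim simp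
  next
    case 2
    then show ?thesis by simp
  next
    case 3
    with superset[OF S] show ?thesis by (auto elim: eventually_mono)
  qed
qed

lemma eventually_unique_minimal_minimizer:
  fixes R :: "'b set \<Rightarrow> 'c \<Rightarrow> real"
  assumes "finite \<S>" and "P \<in> \<S>"
    and "\<And>S. S \<in> \<S> \<Longrightarrow> \<not> P \<subseteq> S \<Longrightarrow> Liminf F (\<lambda>x. ereal (R S x - R P x)) > 0"
    and "\<And>S. S \<in> \<S> \<Longrightarrow> P \<subset> S \<Longrightarrow> eventually (\<lambda>x. R P x \<le> R S x) F"
  shows "eventually (\<lambda>x. (\<forall>S\<in>\<S>. R P x \<le> R S x) \<and>
                         (\<forall>A\<in>\<S>. (\<forall>S\<in>\<S>. R A x \<le> R S x) \<longrightarrow> P \<subseteq> A)) F"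
proof -
  have "eventually (\<lambda>x. \<forall>S\<in>\<S>. R P x \<le> R S x \<and> (\<not> P \<subseteq> S \<longrightarrow> R P x < R S x)) F"
    using assms(1,3,4) by (rule eventually_risk_separation)
  then show ?thesis
  proof eventually_elim
    case (elim x)
    then have "P \<subseteq> A" if "A \<in> \<S>" and "\<forall>S\<in>\<S>. R A x \<le> R S x" for A
      using that \<open>P \<in> \<S>\<close> by force
    with elim show ?case by blast
  qed
qed

lemma parents_subset_neighbours: "parents E j \<subseteq> neighbours E j"
  by (auto simp: parents_def neighbours_def)

lemma finite_neighbours:
  assumes "E \<subseteq> {1..p} \<times> {1..p}"
  shows "finite (neighbours E j)"
  by (rule finite_subset[of _ "{1..p}"]) (use assms in \<open>auto simp: neighbours_def\<close>)

theorem theorem2: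
  fixes M :: "'a measure" and p :: nat and E :: "(nat \<times> nat) set"
    and a :: "nat \<Rightarrow> nat \<Rightarrow> real" and eps X :: "nat \<Rightarrow> 'a \<Rightarrow> real" and j :: nat
  assumes sem: "max_linear_sem M p E a eps X"
    and j: "j \<in> {1..p}"
    and pa_ne: "parents E j \<noteq> {}"
    and A_cond: "\<And>A. A \<noteq> {} \<Longrightarrow> A \<subseteq> neighbours E j \<Longrightarrow> \<not> parents E j \<subseteq> A \<Longrightarrow>
        Liminf at_top (\<lambda>u. ereal (tail_risk M X j A u - tail_risk M X j (parents E j) u)) > 0"
    and B_cond: "\<And>A. A \<subseteq> neighbours E j \<Longrightarrow> parents E j \<subset> A \<Longrightarrow>
        eventually (\<lambda>u. tail_risk M X j A u \<ge> tail_risk M X j (parents E j) u) at_top"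
  shows "\<exists>u0 > 1. \<forall>u \<ge> u0.
     (\<forall>B. B \<noteq> {} \<and> B \<subseteq> neighbours E j \<longrightarrow>
          tail_risk M X j (parents E j) u \<le> tail_risk M X j B u) \<and>
     (\<forall>A. A \<noteq> {} \<and> A \<subseteq> neighbours E j \<and>
          (\<forall>B. B \<noteq> {} \<and> B \<subseteq> neighbours E j \<longrightarrow> tail_risk M X j A u \<le> tail_risk M X j B u)
          \<longrightarrow> parents E j \<subseteq> A)"
proof -
  define \<S> where "\<S> = {S. S \<noteq> {} \<and> S \<subseteq> neighbours E j}"
  have "finite \<S>"
    using sem finite_neighbours unfolding \<S>_def max_linear_sem_def by auto
  moreover have "parents E j \<in> \<S>"
    using pa_ne parents_subset_neighbours unfolding \<S>_def by blast
  ultimately have "eventually (\<lambda>u. (\<forall>S\<in>\<S>. tail_risk M X j (parents E j) u \<le> tail_risk M X j S u) \<and>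
      (\<forall>A\<in>\<S>. (\<forall>S\<in>\<S>. tail_risk M X j A u \<le> tail_risk M X j S u) \<longrightarrow> parents E j \<subseteq> A)) at_top"
    using A_cond B_cond
    by (intro eventually_unique_minimal_minimizer) (auto simp: \<S>_def)
  then obtain u1 where u1: "\<And>u. u \<ge> u1 \<Longrightarrow>
      (\<forall>S\<in>\<S>. tail_risk M X j (parents E j) u \<le> tail_risk M X j S u) \<and>
      (\<forall>A\<in>\<S>. (\<forall>S\<in>\<S>. tail_risk M X j A u \<le> tail_risk M X j S u) \<longrightarrow> parents E j \<subseteq> A)"
    unfolding eventually_at_top_linorder by blast
  then show ?thesis
    by (intro exI[of _ "max 2 u1"]) (simp add: \<S>_def less_max_iff_disj, meson)
qed

end
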